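(* Let $m,n,M\ge 1$, $A\in\mathbb{R}^{m\times n}$, $\sigma>0$, $\tau>0$, and consider the linear measurement model $y=Ax+\epsilon$ with $x\in\mathbb{R}^n$ and $\epsilon\sim\mathcal{N}(0,\sigma^2 I_m)$ independent of $x$. Let the prior on $x$ be the isotropic Gaussian mixture $$\pi(x)=\sum_{j=1}^M w_j\,\varphi(x;\mu_j,\tau^2 I_n),\qquad \mu_j\in\mathbb{R}^n,\ w_j\ge 0,\ \sum_{j=1}^M w_j=1.$$ Fix an observation $y^\star\in\mathbb{R}^m$, let $\Sigma:=\sigma^2 I_m+\tau^2AA^\top$, and for each $j$ define the score $$s_j(y^\star):=\tfrac12\big\|\Sigma^{-1/2}(y^\star-A\mu_j)\big\|_2^2 .$$ Let $s_{(1)}(y^\star)\le s_{(2)}(y^\star)$ be the smallest and second-smallest of the scores, and let $\delta(y^\star):=\frac1m\big(s_{(2)}(y^\star)-s_{(1)}(y^\star)\big)$. Assume: (1) there is $C>1$ with $1/C\le w_i/w_j\le C$ for all $i,j$; (2) there is a unique minimizer $j^\star=\arg\min_j s_j(y^\star)$, and $\delta(y^\star)\ge\delta_0$ for a constant $\delta_0>0$. Let $\tilde w_j:=w_j\,\varphi(y^\star;A\mu_j,\Sigma)$ and let $J$ be a random variable on $\{1,\dots,M\}$ with $\mathbb{P}(J=j)=\tilde w_j/\sum_{i=1}^M\tilde w_i$. Then (i) $\mathbb{P}(J\ne j^\star)\le CM\exp(-\delta_0 m)$; (ii) the posterior $\pi(\cdot\mid y^\star)$ of $x$ given $y=y^\star$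 satisfies $$\big\|\pi(\cdot\mid y^\star)-\mathcal{N}(m_{j^\star}(y^\star),\Sigma_{\mathrm{post}})\big\|_{\mathsf{TV}}\le CM\exp(-\delta_0 m),$$ where $m_{j^\star}(y^\star)=\mu_{j^\star}+\tau^2A^\top\Sigma^{-1}(y^\star-A\mu_{j^\star})$ and $\Sigma_{\mathrm{post}}=\tau^2 I_n-\tau^4A^\top\Sigma^{-1}A$.
   Context: $\varphi(\cdot;\mu,\Sigma)$ denotes the density of the Gaussian $\mathcal{N}(\mu,\Sigma)$. $\|\cdot\|_{\mathsf{TV}}$ is the total variation distance between probability measures. The posterior $\pi(\cdot\mid y^\star)$ is the Bayesian posterior of $x$ under the stated prior and likelihood $y\mid x\sim\mathcal{N}(Ax,\sigma^2I_m)$. *)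

theory Defs
  imports "HOL-Probability.Probability"
begin

definition gauss_density :: "real^'k \<Rightarrow> real^'k^'k \<Rightarrow> real^'k \<Rightarrow> real" where
  "gauss_density mu S x =
     exp (- ((x - mu) \<bullet> (matrix_inv S *v (x - mu))) / 2)
     / sqrt ((2 * pi) ^ CARD('k) * det S)"

definition gauss_measure :: "real^'k \<Rightarrow> real^'k^'k \<Rightarrow> (real^'k) measure" where
  "gauss_measure mu S = density lborel (\<lambda>x. ennreal (gauss_density mu S x))"

definition psd_sqrt :: "real^'k^'k \<Rightarrow> real^'k^'k" where
  "psd_sqrt S = (THE R. transpose R = R \<and> (\<forall>x. 0 \<le> x \<bullet> (R *v x)) \<and> R ** R = S)"

definition tv_dist :: "'a measure \<Rightarrow> 'a measure \<Rightarrow> real" where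
  "tv_dist P Q = (SUP B \<in> sets P. \<bar>measure P B - measure Q B\<bar>)"

definition gm_prior :: "nat \<Rightarrow> (nat \<Rightarrow> real) \<Rightarrow> (nat \<Rightarrow> real^'n) \<Rightarrow> real \<Rightarrow> real^'n \<Rightarrow> real" where
  "gm_prior M w mu \<tau> x = (\<Sum>j<M. w j * gauss_density (mu j) (\<tau>\<^sup>2 *\<^sub>R mat 1) x)"

definition posterior :: "(real^'n \<Rightarrow> real) \<Rightarrow> real^'n^'m \<Rightarrow> real \<Rightarrow> real^'m \<Rightarrow> (real^'n) measure" where
  "posterior p A \<sigma> ystar =
     (let L = (\<lambda>x. p x * gauss_density (A *v x) (\<sigma>\<^sup>2 *\<^sub>R mat 1) ystar);
          Z = (\<integral>x. L x \<partial>lborel)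
      in density lborel (\<lambda>x. ennreal (L x / Z)))"

end

theory Submission
  imports Defs
begin

(*
  Completing the square in x factors the product of the prior component N(mu_j, tau^2 I) and the
  likelihood N(A x, sigma^2 I) as a constant times phi(y; A mu_j, Sigma) phi(x; m_j(y), Sigma_post),
  where Sigma_post^-1 = tau^-2 I + sigma^-2 A^T A does not depend on j. Hence the posterior is the
  Gaussian mixture of the N(m_j(y), Sigma_post) with weights P(J = j), and its total variation distance
  to the component of jstar is at most P(J <> jstar). Since phi(y; A mu_j, Sigma) is proportional to
  exp(-s_j), every P(J = j) with j <> jstar is at most (w_j / w_jstar) exp(-(s_j - s_jstar)), hence at
  most C exp(-delta_0 m).

  Normalising the posterior needs the Gaussian integral of exp(-x.Hx/2) for positive definite H, which
  shears of determinant 1 reduce to the diagonal case; identifying s_j with the quadratic form of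
  Sigma^-1 needs the uniqueness of positive semidefinite square roots, i.e. the spectral theorem.
*)

section \<open>Matrices and positive definiteness\<close>

declare transpose_matrix_vector [simp del]

lemma
  fixes A :: "real^'k^'k"
  assumes "invertible A"
  shows matrix_inv_right: "A ** matrix_inv A = mat 1"
    and matrix_inv_left: "matrix_inv A ** A = mat 1"
proof -
  have "\<exists>A'. A ** A' = mat 1 \<and> A' ** A = mat 1" using assms unfolding invertible_def by blast
  from someI_ex[OF this] show "A ** matrix_inv A = mat 1" "matrix_inv A ** A = mat 1"
    unfolding matrix_inv_def by auto
qed

lemma matrix_inv_unique:
  fixes A B :: "real^'k^'k"
  assumes "A ** B = mat 1"
  shows "matrix_inv A = B"
proof -
  have inv: "invertible A" using assms invertible_right_inverse by blast
  have "matrix_inv A = (matrix_inv A ** A) ** B" by (simp add: assms flip: matrix_mul_assoc)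
  also have "\<dots> = B" by (simp add: matrix_inv_left[OF inv])
  finally show ?thesis .
qed

lemma matrix_entry_eq_inner_axis: "(M::real^'k^'l)$i$j = axis i 1 \<bullet> (M *v axis j 1)"
  by (simp add: matrix_vector_mult_basis column_def inner_axis')

lemma inner_matrix_vector_transpose: "(A *v x) \<bullet> y = x \<bullet> (transpose A *v y)"
  for A :: "real^'a^'b"
  by (metis dot_lmul_matrix inner_commute transpose_matrix_vector)

lemma inner_matrix_vector_symmetric:
  fixes A :: "real^'a^'a"
  assumes "transpose A = A"
  shows "x \<bullet> (A *v y) = y \<bullet> (A *v x)"
proof -
  have "x \<bullet> (A *v y) = (A *v y) \<bullet> x" by (rule inner_commute)
  also have "\<dots> = y \<bullet> (transpose A *v x)" by (rule inner_matrix_vector_transpose)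
  finally show ?thesis by (simp only: assms)
qed

lemma transpose_add: "transpose (A + B) = transpose A + transpose B"
  by (simp add: transpose_def vec_eq_iff)

lemma scaleR_add_eq_imp_eq:
  fixes u v z :: "'a::real_vector"
  assumes "a *\<^sub>R v + c *\<^sub>R u = z" and "c \<noteq> 0"
  shows "u = (1/c) *\<^sub>R (z - a *\<^sub>R v)"
proof -
  have cu: "c *\<^sub>R u = z - a *\<^sub>R v" using assms(1) by (simp add: eq_diff_eq add.commute)
  from assms(2) have "u = (1/c) *\<^sub>R (c *\<^sub>R u)" by simp
  also have "\<dots> = (1/c) *\<^sub>R (z - a *\<^sub>R v)" by (simp only: cu)
  finally show ?thesis .
qed

lemma det_matrix_inv: "invertible S \<Longrightarrow> det (matrix_inv S) = 1 / det S"
  for S :: "real^'k^'k"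
proof -
  assume inv: "invertible S"
  have "det S * det (matrix_inv S) = 1"
    by (simp add: matrix_inv_right[OF inv] flip: det_mul)
  then have "det S \<noteq> 0" by auto
  with \<open>det S * det (matrix_inv S) = 1\<close> show ?thesis by (simp add: eq_divide_eq mult.commute)
qed

definition pos_semidef :: "real^'k^'k \<Rightarrow> bool" where
  "pos_semidef S \<longleftrightarrow> transpose S = S \<and> (\<forall>x. 0 \<le> x \<bullet> (S *v x))"

definition pos_def :: "real^'k^'k \<Rightarrow> bool" where
  "pos_def S \<longleftrightarrow> transpose S = S \<and> (\<forall>x. x \<noteq> 0 \<longrightarrow> 0 < x \<bullet> (S *v x))"

lemma pos_def_imp_pos_semidef:
  assumes "pos_def S"
  shows "pos_semidef S"
proof -
  have "0 \<le> x \<bullet> (S *v x)" for x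
    using assms by (cases "x = 0") (auto simp: pos_def_def intro: less_imp_le)
  then show ?thesis using assms by (simp add: pos_def_def pos_semidef_def)
qed

lemma pos_def_invertible:
  assumes "pos_def S"
  shows "invertible S"
proof -
  have "inj ((*v) S)"
  proof (rule linear_injective_0[THEN iffD2, OF matrix_vector_mul_linear], intro allI impI)
    fix x assume "S *v x = 0"
    then show "x = 0" using assms unfolding pos_def_def by (metis inner_zero_right less_irrefl)
  qed
  then show ?thesis by (simp add: invertible_left_inverse matrix_left_invertible_injective)
qed

lemma pos_def_matrix_inv:
  assumes S: "pos_def S"
  shows "pos_def (matrix_inv S)"
proof -
  note inv = matrix_inv_left[OF pos_def_invertible[OF S]] matrix_inv_right[OF pos_def_invertible[OF S]]
  have symS: "transpose S = S" using S by (simp add: pos_def_def)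
  have "S ** transpose (matrix_inv S) = transpose (matrix_inv S ** transpose S)"
    by (simp add: matrix_transpose_mul)
  also have "\<dots> = mat 1" by (simp add: symS inv(1) transpose_mat)
  finally have "S ** transpose (matrix_inv S) = mat 1" .
  then have "transpose (matrix_inv S) = matrix_inv S" by (rule matrix_inv_unique[symmetric])
  moreover have "0 < x \<bullet> (matrix_inv S *v x)" if "x \<noteq> 0" for x
  proof -
    define z where "z = matrix_inv S *v x"
    have x: "x = S *v z" by (simp add: z_def matrix_vector_mul_assoc inv(2))
    then have "z \<noteq> 0" using that by auto
    then have "0 < z \<bullet> (S *v z)" using S by (simp add: pos_def_def)
    also have "z \<bullet> (S *v z) = x \<bullet> z" unfolding x by (rule inner_commute)
    finally show ?thesis by (simp add: z_def)
  qed
  ultimately show ?thesis by (simp add: pos_def_def)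
qed

lemma pos_def_diag_pos:
  assumes "pos_def H"
  shows "H$i$i > 0"
proof -
  have "0 < axis i 1 \<bullet> (H *v axis i 1)" using assms by (simp add: pos_def_def axis_eq_0_iff)
  then show ?thesis by (simp add: matrix_entry_eq_inner_axis)
qed

lemma symmetric_matrix_entry:
  assumes "transpose H = H"
  shows "H$k$l = H$l$k"
proof -
  have "(transpose H)$l$k = H$l$k" using assms by simp
  then show ?thesis by (simp add: transpose_def)
qed

lemma pos_def_identity_plus_gram:
  fixes B :: "real^'n^'m"
  assumes a: "a > 0" and b: "b \<ge> 0"
  shows "pos_def (a *\<^sub>R mat 1 + b *\<^sub>R (transpose B ** B))"
proof -
  let ?S = "a *\<^sub>R mat 1 + b *\<^sub>R (transpose B ** B)"
  have "?S *v x = a *\<^sub>R x + b *\<^sub>R (transpose B *v (B *v x))" for x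
    by (simp add: matrix_vector_mult_add_rdistrib flip: scaleR_matrix_vector_assoc matrix_vector_mul_assoc)
  then have quad: "x \<bullet> (?S *v x) = a * (x \<bullet> x) + b * ((B *v x) \<bullet> (B *v x))" for x
    by (simp add: inner_add_right inner_matrix_vector_transpose)
  have "transpose ?S = ?S" by (simp add: transpose_add transpose_scalar matrix_transpose_mul)
  moreover have "0 < x \<bullet> (?S *v x)" if "x \<noteq> 0" for x
    using a b that by (simp add: quad add_pos_nonneg)
  ultimately show ?thesis by (simp add: pos_def_def)
qed

section \<open>Spectral theorem and positive semidefinite square roots\<close>

lemma quadratic_nonneg_imp_linear_coeff_zero:
  fixes q X :: real
  assumes "\<And>t. 0 \<le> 2*t*q + t^2*X"
  shows "q = 0"
proof -
  define K where "K = \<bar>X\<bar> + 1"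
  have K: "K > 0" "X - 2*K < 0" unfolding K_def by auto
  have "0 \<le> 2*(-q/K)*q + (-q/K)^2*X" by (rule assms)
  then have "0 \<le> (2*(-q/K)*q + (-q/K)^2*X) * K^2" using K by simp
  also have "\<dots> = q^2 * (X - 2*K)" using K by (simp add: field_simps power2_eq_square)
  finally have "q^2 \<le> 0" using K by (simp add: zero_le_mult_iff)
  then show ?thesis by simp
qed

lemma quadratic_form_add_scaleR:
  fixes A :: "real^'k^'k"
  assumes "transpose A = A"
  shows "(u + t *\<^sub>R v) \<bullet> (A *v (u + t *\<^sub>R v)) = u \<bullet> (A *v u) + 2*t*(v \<bullet> (A *v u)) + t^2 * (v \<bullet> (A *v v))"
  using inner_matrix_vector_symmetric[OF assms, of u v]
  by (simp add: matrix_vector_right_distrib matrix_vector_mult_scaleR inner_add_left inner_add_right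
      power2_eq_square algebra_simps)

lemma quadratic_form_le_max_on_sphere:
  fixes A :: "real^'k^'k"
  assumes V: "subspace V" and max: "\<forall>z\<in>V. norm z = 1 \<longrightarrow> z \<bullet> (A *v z) \<le> l" and y: "y \<in> V"
  shows "y \<bullet> (A *v y) \<le> l * (norm y)^2"
proof (cases "y = 0")
  case False
  let ?z = "(1 / norm y) *\<^sub>R y"
  have "?z \<in> V" "norm ?z = 1" using y V False by (simp_all add: subspace_scale)
  then have "?z \<bullet> (A *v ?z) \<le> l" using max by blast
  moreover have "?z \<bullet> (A *v ?z) = (y \<bullet> (A *v y)) / (norm y)^2"
    by (simp add: matrix_vector_mult_scaleR power2_eq_square)
  ultimately have "(y \<bullet> (A *v y)) / (norm y)^2 \<le> l" by linarith
  then show ?thesis using False by (simp add: divide_le_eq mult.commute)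
qed simp

lemma rayleigh_maximizer_is_eigenvector:
  fixes A :: "real^'k^'k"
  assumes sym: "transpose A = A" and V: "subspace V" and inv: "\<forall>x\<in>V. A *v x \<in> V"
    and u: "u \<in> V" "norm u = 1"
    and max: "\<forall>y\<in>V. norm y = 1 \<longrightarrow> y \<bullet> (A *v y) \<le> u \<bullet> (A *v u)"
  shows "A *v u = (u \<bullet> (A *v u)) *\<^sub>R u"
proof -
  define l where "l = u \<bullet> (A *v u)"
  have uu: "u \<bullet> u = 1" using u(2) by (simp add: norm_eq_1)
  have bound: "y \<bullet> (A *v y) \<le> l * (norm y)^2" if "y \<in> V" for y
    using quadratic_form_le_max_on_sphere[OF V _ that] max l_def by blast
  \<comment> \<open>first-order optimality of \<open>u\<close> along \<open>u + t v\<close> for \<open>v \<bottom> u\<close>\<close>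
  have orth: "v \<bullet> (A *v u) = 0" if v: "v \<in> V" "v \<bullet> u = 0" for v
  proof -
    have "- (v \<bullet> (A *v u)) = 0"
    proof (rule quadratic_nonneg_imp_linear_coeff_zero[where X = "l * (norm v)^2 - v \<bullet> (A *v v)"])
      fix t :: real
      have "(norm (u + t *\<^sub>R v))^2 = (u + t *\<^sub>R v) \<bullet> (u + t *\<^sub>R v)"
        by (simp only: power2_norm_eq_inner)
      also have "\<dots> = u \<bullet> u + 2 * t * (u \<bullet> v) + t^2 * (v \<bullet> v)"
        by (simp add: inner_add_left inner_add_right inner_commute power2_eq_square)
      finally have "(norm (u + t *\<^sub>R v))^2 = 1 + t^2 * (norm v)^2"
        using uu v by (simp add: inner_commute power2_norm_eq_inner)
      moreover have "u + t *\<^sub>R v \<in> V" using u v V by (simp add: subspace_add subspace_scale)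
      moreover have "(u + t *\<^sub>R v) \<bullet> (A *v (u + t *\<^sub>R v)) = l + 2*t*(v \<bullet> (A *v u)) + t^2 * (v \<bullet> (A *v v))"
        unfolding quadratic_form_add_scaleR[OF sym] l_def ..
      ultimately show "0 \<le> 2*t*(- (v \<bullet> (A *v u))) + t^2 * (l * (norm v)^2 - v \<bullet> (A *v v))"
        using bound[of "u + t *\<^sub>R v"] by (simp add: algebra_simps)
    qed
    then show ?thesis by simp
  qed
  define w where "w = A *v u - l *\<^sub>R u"
  have "w \<in> V" unfolding w_def using u inv V by (simp add: subspace_diff subspace_scale)
  moreover have wu: "w \<bullet> u = 0" unfolding w_def l_def using uu
    by (simp add: inner_diff_left inner_diff_right inner_commute)
  ultimately have "w \<bullet> (A *v u) = 0" using orth by blast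
  then have "w \<bullet> w = 0" using wu unfolding w_def by (simp add: inner_diff_right)
  then have "w = 0" by simp
  then show ?thesis unfolding w_def l_def by simp
qed

lemma symmetric_invariant_subspace_eigenvector:
  fixes A :: "real^'k^'k"
  assumes sym: "transpose A = A" and V: "subspace V" and inv: "\<forall>x\<in>V. A *v x \<in> V"
    and nontriv: "V \<noteq> {0}"
  obtains u where "u \<in> V" "norm u = 1" "A *v u = (u \<bullet> (A *v u)) *\<^sub>R u"
proof -
  obtain v where v: "v \<in> V" "v \<noteq> 0" using nontriv V subspace_0 by blast
  define S where "S = V \<inter> sphere 0 1"
  have "compact S" unfolding S_def using V
    by (metis closed_subspace compact_Int_closed compact_sphere Int_commute)
  moreover have "(1 / norm v) *\<^sub>R v \<in> S" using v V by (simp add: S_def subspace_scale)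
  then have "S \<noteq> {}" by blast
  moreover have "continuous_on S (\<lambda>y. y \<bullet> (A *v y))"
    by (intro continuous_intros linear_continuous_on matrix_vector_mul_bounded_linear)
  ultimately obtain u where u: "u \<in> S" and "\<forall>y\<in>S. y \<bullet> (A *v y) \<le> u \<bullet> (A *v u)"
    using continuous_attains_sup by blast
  then have "A *v u = (u \<bullet> (A *v u)) *\<^sub>R u"
    by (intro rayleigh_maximizer_is_eigenvector[OF sym V inv]) (auto simp: S_def)
  with u show ?thesis using that by (auto simp: S_def)
qed

lemma span_insert_orthogonal_complement:
  assumes V: "subspace V" and u: "u \<in> V" "u \<bullet> u = 1" and B: "span B = {x \<in> V. x \<bullet> u = 0}"
  shows "span (insert u B) = V"
proof (rule span_subspace)
  show "insert u B \<subseteq> V" using u(1) B span_superset[of B] by blast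
  show "V \<subseteq> span (insert u B)"
  proof
    fix x assume x: "x \<in> V"
    have "x - (x \<bullet> u) *\<^sub>R u \<in> span B" using x u V B
      by (auto simp: inner_diff_left subspace_diff subspace_scale)
    then have "x - (x \<bullet> u) *\<^sub>R u \<in> span (insert u B)" by (metis span_mono subset_insertI subsetD)
    moreover have "(x \<bullet> u) *\<^sub>R u \<in> span (insert u B)" by (simp add: span_base span_scale)
    ultimately have "x - (x \<bullet> u) *\<^sub>R u + (x \<bullet> u) *\<^sub>R u \<in> span (insert u B)" by (rule span_add)
    then show "x \<in> span (insert u B)" by simp
  qed
qed (rule V)

lemma symmetric_invariant_subspace_eigenbasis:
  fixes A :: "real^'k^'k"
  assumes sym: "transpose A = A"
  shows "subspace V \<Longrightarrow> (\<forall>x\<in>V. A *v x \<in> V) \<Longrightarrow>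
    \<exists>B. B \<subseteq> V \<and> span B = V \<and> pairwise orthogonal B \<and>
        (\<forall>b\<in>B. norm b = 1 \<and> A *v b = (b \<bullet> (A *v b)) *\<^sub>R b)"
proof (induction "dim V" arbitrary: V rule: less_induct)
  case less
  show ?case
  proof (cases "V = {0}")
    case True
    then show ?thesis by (intro exI[of _ "{}"]) auto
  next
    case False
    obtain u where u: "u \<in> V" "norm u = 1" and eig: "A *v u = (u \<bullet> (A *v u)) *\<^sub>R u"
      using symmetric_invariant_subspace_eigenvector[OF sym less.prems False] by blast
    have uu: "u \<bullet> u = 1" using u(2) by (simp add: norm_eq_1)
    define W where "W = {x \<in> V. x \<bullet> u = 0}"
    have subW: "subspace W" unfolding W_def using less.prems(1)
      by (auto simp: subspace_def inner_add_left)
    have invW: "\<forall>x\<in>W. A *v x \<in> W"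
    proof
      fix x assume x: "x \<in> W"
      have "(A *v x) \<bullet> u = x \<bullet> (A *v u)"
        using inner_matrix_vector_symmetric[OF sym, of u x] by (simp only: inner_commute[of "A *v x" u])
      also have "\<dots> = 0" using x by (subst eig) (simp add: W_def)
      finally show "A *v x \<in> W" using x less.prems(2) by (auto simp: W_def)
    qed
    have "u \<notin> W" using uu by (simp add: W_def)
    then have "W \<subset> V" using u(1) unfolding W_def by blast
    moreover have "span W = W" "span V = V" using subW less.prems(1) by (simp_all add: span_eq_iff)
    ultimately have "span W \<subset> span V" by (simp only:)
    then have "dim W < dim V" by (rule dim_psubset)
    then obtain B where B: "B \<subseteq> W" "span B = W" "pairwise orthogonal B"
        "\<forall>b\<in>B. norm b = 1 \<and> A *v b = (b \<bullet> (A *v b)) *\<^sub>R b"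
      using less.hyps subW invW by blast
    have sub: "insert u B \<subseteq> V" using B(1) u(1) by (auto simp: W_def)
    have span: "span (insert u B) = V"
      using span_insert_orthogonal_complement[OF less.prems(1) u(1) uu] B(2) by (simp add: W_def)
    have orth: "pairwise orthogonal (insert u B)"
      using B(1,3) by (auto simp: pairwise_insert W_def orthogonal_def inner_commute)
    have eigen: "\<forall>b\<in>insert u B. norm b = 1 \<and> A *v b = (b \<bullet> (A *v b)) *\<^sub>R b"
      using B(4) u(2) eig by blast
    show ?thesis by (rule exI[of _ "insert u B"]) (use sub span orth eigen in blast)
  qed
qed

lemma symmetric_matrix_orthonormal_eigenbasis:
  fixes A :: "real^'k^'k"
  assumes "transpose A = A"
  obtains B where "finite B" "span B = UNIV" "pairwise orthogonal B" "\<And>b. b \<in> B \<Longrightarrow> norm b = 1"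
    "\<And>b. b \<in> B \<Longrightarrow> A *v b = (b \<bullet> (A *v b)) *\<^sub>R b"
proof -
  obtain B where B: "span B = UNIV" "pairwise orthogonal B"
      "\<forall>b\<in>B. norm b = 1 \<and> A *v b = (b \<bullet> (A *v b)) *\<^sub>R b"
    using symmetric_invariant_subspace_eigenbasis[OF assms, of UNIV] by auto
  have "0 \<notin> B" using B(3) by force
  then have "finite B"
    using B(2) pairwise_orthogonal_independent independent_imp_finite by blast
  with B that show ?thesis by blast
qed

lemma matrix_vector_mult_sum_scaleR:
  "(S :: real^'k^'l) *v (\<Sum>b\<in>B. f b *\<^sub>R g b) = (\<Sum>b\<in>B. f b *\<^sub>R (S *v g b))"
  using matrix_vector_mul_linear[of S] by (simp add: linear_sum linear_scale)

lemma pos_semidef_quadratic_form_zero: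
  assumes R: "pos_semidef R" and x0: "x \<bullet> (R *v x) = 0"
  shows "R *v x = 0"
proof -
  have sym: "transpose R = R" using R by (simp add: pos_semidef_def)
  have "y \<bullet> (R *v x) = 0" for y
  proof (rule quadratic_nonneg_imp_linear_coeff_zero[where X = "y \<bullet> (R *v y)"])
    fix t :: real
    have "0 \<le> (x + t *\<^sub>R y) \<bullet> (R *v (x + t *\<^sub>R y))" using R by (simp add: pos_semidef_def)
    then show "0 \<le> 2*t*(y \<bullet> (R *v x)) + t^2 * (y \<bullet> (R *v y))"
      using x0 quadratic_form_add_scaleR[OF sym, of x t y] by simp
  qed
  from this[of "R *v x"] show ?thesis by simp
qed

lemma pos_semidef_sqrt_diff_eigenvector:
  fixes R1 R2 :: "real^'k^'k"
  assumes R1: "pos_semidef R1" and R2: "pos_semidef R2" and eq: "R1 ** R1 = R2 ** R2"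
    and e: "(R1 - R2) *v b = l *\<^sub>R b"
  shows "(R1 - R2) *v b = 0"
proof -
  define D where "D = R1 - R2"
  have "transpose R1 = R1" "transpose R2 = R2" using R1 R2 by (simp_all add: pos_semidef_def)
  then have symD: "transpose D = D" by (simp add: D_def transpose_def vec_eq_iff)
  \<comment> \<open>\<open>R1 D + D R2 = R1\<^sup>2 - R2\<^sup>2 = 0\<close>, tested against the eigenvector \<open>b\<close>\<close>
  have "R1 *v (D *v b) + D *v (R2 *v b) = (R1 ** R1) *v b - (R2 ** R2) *v b"
    by (simp add: D_def matrix_vector_mult_diff_rdistrib matrix_vector_mult_diff_distrib
        flip: matrix_vector_mul_assoc)
  then have "b \<bullet> (R1 *v (D *v b)) + b \<bullet> (D *v (R2 *v b)) = 0"
    using eq by (metis inner_add_right inner_zero_right diff_self)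
  moreover have "b \<bullet> (D *v (R2 *v b)) = (D *v b) \<bullet> (R2 *v b)"
    using inner_matrix_vector_symmetric[OF symD, of b "R2 *v b"] by (simp add: inner_commute)
  ultimately have "l * (b \<bullet> (R1 *v b) + b \<bullet> (R2 *v b)) = 0"
    using e by (simp add: D_def matrix_vector_mult_scaleR algebra_simps inner_commute)
  then have "l = 0 \<or> b \<bullet> (R1 *v b) + b \<bullet> (R2 *v b) = 0" by simp
  moreover have "b \<bullet> (R1 *v b) \<ge> 0" "b \<bullet> (R2 *v b) \<ge> 0" using R1 R2 by (simp_all add: pos_semidef_def)
  ultimately consider "l = 0" | "b \<bullet> (R1 *v b) = 0" "b \<bullet> (R2 *v b) = 0"
    by (auto simp: add_nonneg_eq_0_iff)
  then show ?thesis
  proof cases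
    case 2
    then have "R1 *v b = 0" "R2 *v b = 0" using R1 R2 pos_semidef_quadratic_form_zero by blast+
    then show ?thesis by (simp add: matrix_vector_mult_diff_rdistrib)
  qed (simp add: e)
qed

lemma pos_semidef_sqrt_unique:
  fixes R1 R2 :: "real^'k^'k"
  assumes R1: "pos_semidef R1" and R2: "pos_semidef R2" and eq: "R1 ** R1 = R2 ** R2"
  shows "R1 = R2"
proof -
  have "transpose R1 = R1" "transpose R2 = R2" using R1 R2 by (simp_all add: pos_semidef_def)
  then have "transpose (R1 - R2) = R1 - R2" by (simp add: transpose_def vec_eq_iff)
  then obtain B where B: "finite B" "span B = UNIV" "pairwise orthogonal B" "\<And>b. b \<in> B \<Longrightarrow> norm b = 1"
      "\<And>b. b \<in> B \<Longrightarrow> (R1 - R2) *v b = (b \<bullet> ((R1 - R2) *v b)) *\<^sub>R b"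
    using symmetric_matrix_orthonormal_eigenbasis by blast
  have "(R1 - R2) *v x = 0 *v x" for x
  proof -
    have "(\<Sum>b\<in>B. (x \<bullet> b) *\<^sub>R b) = x" using orthonormal_basis_expand[OF B(3,4)] B(1,2) by simp
    then have "(R1 - R2) *v x = (R1 - R2) *v (\<Sum>b\<in>B. (x \<bullet> b) *\<^sub>R b)" by simp
    also have "\<dots> = 0"
      using pos_semidef_sqrt_diff_eigenvector[OF R1 R2 eq B(5)] by (simp add: matrix_vector_mult_sum_scaleR)
    finally show ?thesis by simp
  qed
  then have "R1 - R2 = 0" by (simp add: matrix_eq)
  then show ?thesis by simp
qed

lemma outer_sum_matrix_mult:
  "(\<chi> i j. \<Sum>b\<in>B. c b * b$i * b$j) *v x = (\<Sum>b\<in>B. (c b * (b \<bullet> x)) *\<^sub>R (b :: real^'k))"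
proof -
  have "((\<chi> i j. \<Sum>b\<in>B. c b * b$i * b$j) *v x)$i = (\<Sum>b\<in>B. (c b * (b \<bullet> x)) * b$i)" for i
  proof -
    have "((\<chi> i j. \<Sum>b\<in>B. c b * b$i * b$j) *v x)$i = (\<Sum>j\<in>UNIV. \<Sum>b\<in>B. c b * b$i * b$j * x$j)"
      by (simp add: matrix_vector_mult_def sum_distrib_right)
    also have "\<dots> = (\<Sum>b\<in>B. \<Sum>j\<in>UNIV. c b * b$i * b$j * x$j)" by (rule sum.swap)
    also have "\<dots> = (\<Sum>b\<in>B. (c b * (b \<bullet> x)) * b$i)"
      by (simp add: inner_vec_def sum_distrib_left mult_ac)
    finally show ?thesis .
  qed
  then show ?thesis by (simp add: vec_eq_iff sum_component)
qed

lemma inner_orthonormal_sum: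
  fixes B :: "'a::real_inner set"
  assumes "finite B" "pairwise orthogonal B" "\<And>b. b \<in> B \<Longrightarrow> norm b = 1" and b: "b \<in> B"
  shows "b \<bullet> (\<Sum>b'\<in>B. f b' *\<^sub>R b') = f b"
proof -
  have "b \<bullet> (\<Sum>b'\<in>B. f b' *\<^sub>R b') = (\<Sum>b'\<in>B. if b' = b then f b else 0)"
    unfolding inner_sum_right using assms
    by (intro sum.cong) (auto simp: pairwise_def orthogonal_def norm_eq_1 inner_commute)
  then show ?thesis using assms(1) b by simp
qed

lemma pos_semidef_sqrt_exists:
  fixes S :: "real^'k^'k"
  assumes S: "pos_semidef S"
  obtains R where "pos_semidef R" "R ** R = S"
proof -
  have "transpose S = S" using S by (simp add: pos_semidef_def)
  then obtain B where B: "finite B" "span B = UNIV" "pairwise orthogonal B" "\<And>b. b \<in> B \<Longrightarrow> norm b = 1"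
      "\<And>b. b \<in> B \<Longrightarrow> S *v b = (b \<bullet> (S *v b)) *\<^sub>R b"
    using symmetric_matrix_orthonormal_eigenbasis by blast
  define l where "l b = sqrt (b \<bullet> (S *v b))" for b
  have l2: "l b * l b = b \<bullet> (S *v b)" for b unfolding l_def using S by (simp add: pos_semidef_def)
  define R :: "real^'k^'k" where "R = (\<chi> i j. \<Sum>b\<in>B. l b * b$i * b$j)"
  have Rv: "R *v x = (\<Sum>b\<in>B. (l b * (b \<bullet> x)) *\<^sub>R b)" for x
    unfolding R_def by (rule outer_sum_matrix_mult)
  have "transpose R = R" by (simp add: R_def transpose_def vec_eq_iff mult_ac)
  moreover have "0 \<le> x \<bullet> (R *v x)" for x
  proof -
    have "x \<bullet> (R *v x) = (\<Sum>b\<in>B. l b * (b \<bullet> x)^2)"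
      by (simp add: Rv inner_sum_right power2_eq_square inner_commute mult_ac)
    also have "\<dots> \<ge> 0" using S by (intro sum_nonneg) (simp add: l_def pos_semidef_def)
    finally show ?thesis .
  qed
  ultimately have "pos_semidef R" by (simp add: pos_semidef_def)
  have "(R ** R) *v x = S *v x" for x
  proof -
    have "(R ** R) *v x = (\<Sum>b\<in>B. (l b * (b \<bullet> (R *v x))) *\<^sub>R b)"
      by (simp only: Rv flip: matrix_vector_mul_assoc)
    also have "\<dots> = (\<Sum>b\<in>B. (x \<bullet> b) *\<^sub>R (S *v b))"
    proof (rule sum.cong)
      fix b assume b: "b \<in> B"
      have "b \<bullet> (R *v x) = l b * (b \<bullet> x)" unfolding Rv by (rule inner_orthonormal_sum[OF B(1,3,4) b])
      then have "(l b * (b \<bullet> (R *v x))) *\<^sub>R b = (x \<bullet> b) *\<^sub>R ((l b * l b) *\<^sub>R b)"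
        by (simp add: inner_commute[of x b] algebra_simps)
      also have "\<dots> = (x \<bullet> b) *\<^sub>R (S *v b)" by (subst B(5)[OF b]) (simp only: l2)
      finally show "(l b * (b \<bullet> (R *v x))) *\<^sub>R b = (x \<bullet> b) *\<^sub>R (S *v b)" .
    qed simp
    also have "\<dots> = S *v x"
      using orthonormal_basis_expand[OF B(3,4)] B(1,2) by (simp flip: matrix_vector_mult_sum_scaleR)
    finally show ?thesis .
  qed
  then have "R ** R = S" by (simp add: matrix_eq)
  with \<open>pos_semidef R\<close> show ?thesis by (rule that)
qed

lemma psd_sqrt:
  assumes "pos_semidef S"
  shows "pos_semidef (psd_sqrt S)" "psd_sqrt S ** psd_sqrt S = S"
proof -
  obtain R where R: "pos_semidef R" "R ** R = S" using pos_semidef_sqrt_exists[OF assms] by blast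
  have "psd_sqrt S = R" unfolding psd_sqrt_def
  proof (rule the_equality)
    show "transpose R = R \<and> (\<forall>x. 0 \<le> x \<bullet> (R *v x)) \<and> R ** R = S" using R by (simp add: pos_semidef_def)
    show "R' = R" if R': "transpose R' = R' \<and> (\<forall>x. 0 \<le> x \<bullet> (R' *v x)) \<and> R' ** R' = S" for R'
    proof (rule pos_semidef_sqrt_unique)
      show "pos_semidef R'" using R' by (simp add: pos_semidef_def)
      show "R' ** R' = R ** R" using R' R(2) by simp
    qed (rule R(1))
  qed
  with R show "pos_semidef (psd_sqrt S)" "psd_sqrt S ** psd_sqrt S = S" by simp_all
qed

lemma norm_psd_sqrt_mult_squared:
  assumes "pos_semidef S"
  shows "(norm (psd_sqrt S *v x))\<^sup>2 = x \<bullet> (S *v x)"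
proof -
  have "(norm (psd_sqrt S *v x))\<^sup>2 = x \<bullet> (transpose (psd_sqrt S) *v (psd_sqrt S *v x))"
    by (simp only: power2_norm_eq_inner inner_matrix_vector_transpose)
  also have "\<dots> = x \<bullet> (S *v x)"
    using psd_sqrt[OF assms] unfolding pos_semidef_def by (simp only: matrix_vector_mul_assoc)
  finally show ?thesis .
qed

section \<open>Gaussian integrals\<close>

lemma borel_measurable_matrix_vector_mult [measurable]: "(*v) (M::real^'a^'b) \<in> borel_measurable borel"
  by (rule borel_measurable_continuous_onI[OF linear_continuous_on[OF matrix_vector_mul_bounded_linear]])

lemma nn_integral_lborel_translate:
  fixes f :: "'a::euclidean_space \<Rightarrow> ennreal"
  assumes [measurable]: "f \<in> borel_measurable borel"
  shows "(\<integral>\<^sup>+x. f (x - c) \<partial>lborel) = (\<integral>\<^sup>+x. f x \<partial>lborel)"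
proof -
  have "(\<integral>\<^sup>+x. f x \<partial>lborel) = (\<integral>\<^sup>+x. f x \<partial>(distr lborel borel ((+) (- c))))"
    by (simp add: lborel_distr_plus)
  also have "\<dots> = (\<integral>\<^sup>+x. f (- c + x) \<partial>lborel)" by (subst nn_integral_distr) auto
  finally show ?thesis by simp
qed

lemma real_sqrt_prod: "finite A \<Longrightarrow> sqrt (\<Prod>i\<in>A. f i) = (\<Prod>i\<in>A. sqrt (f i :: real))"
  by (induct rule: finite_induct) (simp_all add: real_sqrt_mult)

lemma nn_integral_exp_neg_square:
  fixes d :: real
  assumes d: "d > 0"
  shows "(\<integral>\<^sup>+t. ennreal (exp (- (d * t^2) / 2)) \<partial>lborel) = ennreal (sqrt (2 * pi / d))"
proof -
  define s where "s = 1 / sqrt d"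
  have s: "s > 0" "s^2 = 1/d" using d by (simp_all add: s_def power_divide)
  have eq: "exp (- (d * t^2) / 2) = sqrt (2 * pi / d) * normal_density 0 s t" for t
  proof -
    have "normal_density 0 s t = 1 / sqrt (2 * pi * (1/d)) * exp (- (t^2) / (2 * (1/d)))"
      unfolding normal_density_def using s by simp
    also have "\<dots> = 1 / sqrt (2 * pi / d) * exp (- (d * t^2) / 2)" using d by (simp add: field_simps)
    finally show ?thesis using d by simp
  qed
  have "(\<integral>\<^sup>+t. ennreal (normal_density 0 s t) \<partial>lborel) = 1"
    using s by (subst nn_integral_eq_integral) auto
  then show ?thesis
    unfolding eq using d by (simp add: ennreal_mult nn_integral_cmult)
qed

lemma nn_integral_exp_diagonal_quadratic_form:
  fixes H :: "real^'k^'k"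
  assumes diag: "\<And>i j. i \<noteq> j \<Longrightarrow> H$i$j = 0" and pos: "\<And>i. H$i$i > 0"
  shows "(\<integral>\<^sup>+x. ennreal (exp (- (x \<bullet> (H *v x)) / 2)) \<partial>lborel) = ennreal (sqrt ((2*pi)^CARD('k) / det H))"
proof -
  define F where "F b t = ennreal (exp (- ((b \<bullet> (H *v b)) * t^2) / 2))" for b :: "real^'k" and t :: real
  have Basis: "(Basis :: (real^'k) set) = (\<lambda>i. axis i 1) ` UNIV" by (auto simp: Basis_vec_def)
  have inj: "inj (\<lambda>i::'k. axis i (1::real))" by (auto simp: inj_def axis_eq_axis)
  have Hii: "axis i 1 \<bullet> (H *v axis i 1) = H$i$i" for i by (simp add: matrix_entry_eq_inner_axis)
  have quad: "x \<bullet> (H *v x) = (\<Sum>i\<in>UNIV. H$i$i * (x$i)^2)" for x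
  proof -
    have "(\<Sum>j\<in>UNIV. H$i$j * x$j) = H$i$i * x$i" for i
      using diag by (subst sum.remove[of _ i]) auto
    then show ?thesis by (simp add: inner_vec_def matrix_vector_mult_def power2_eq_square mult_ac)
  qed
  have "ennreal (exp (- (x \<bullet> (H *v x)) / 2)) = (\<Prod>b\<in>Basis. F b (x \<bullet> b))" for x
  proof -
    have "(\<Prod>b\<in>Basis. F b (x \<bullet> b)) = (\<Prod>i\<in>UNIV. ennreal (exp (- (H$i$i * (x$i)^2) / 2)))"
      unfolding Basis by (simp add: prod.reindex[OF inj] F_def Hii inner_axis)
    also have "\<dots> = ennreal (exp (\<Sum>i\<in>UNIV. - (H$i$i * (x$i)^2) / 2))"
      by (simp add: prod_ennreal exp_sum)
    finally show ?thesis by (simp add: quad sum_negf sum_divide_distrib)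
  qed
  then have "(\<integral>\<^sup>+x. ennreal (exp (- (x \<bullet> (H *v x)) / 2)) \<partial>lborel) = (\<integral>\<^sup>+x. (\<Prod>b\<in>Basis. F b (x \<bullet> b)) \<partial>lborel)"
    by (simp only:)
  also have "\<dots> = (\<Prod>b\<in>Basis. (\<integral>\<^sup>+t. F b t \<partial>lborel))"
    by (rule nn_integral_lborel_prod) (auto simp: F_def)
  also have "\<dots> = (\<Prod>i\<in>UNIV. (\<integral>\<^sup>+t. F (axis i 1) t \<partial>lborel))"
    unfolding Basis by (simp add: prod.reindex[OF inj])
  also have "\<dots> = (\<Prod>i\<in>UNIV. ennreal (sqrt (2 * pi / H$i$i)))"
    by (rule prod.cong) (use nn_integral_exp_neg_square[OF pos] in \<open>simp_all add: F_def Hii\<close>)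
  also have "\<dots> = ennreal (sqrt ((2*pi)^CARD('k) / det H))"
    using pos by (simp add: prod_ennreal less_imp_le det_diagonal[OF diag] prod_dividef flip: real_sqrt_prod)
  finally show ?thesis .
qed

definition shear_matrix :: "'k \<Rightarrow> real^'k \<Rightarrow> real^'k^'k" where
  "shear_matrix i a = (\<chi> k l. (if k = l then 1 else 0) + (if k = i then a$l else 0))"

lemma shear_matrix_mult: "shear_matrix i a *v y = y + (a \<bullet> y) *\<^sub>R axis i 1"
proof -
  have "(shear_matrix i a *v y)$k = (y + (a \<bullet> y) *\<^sub>R axis i 1)$k" for k
  proof -
    have "(shear_matrix i a *v y)$k
        = (\<Sum>l\<in>UNIV. (if k = l then 1 else 0) * y$l) + (\<Sum>l\<in>UNIV. (if k = i then a$l else 0) * y$l)"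
      by (simp add: shear_matrix_def matrix_vector_mult_def distrib_right sum.distrib)
    also have "(\<Sum>l\<in>UNIV. (if k = l then 1 else 0) * y$l) = y$k"
      by (simp add: if_distrib[of "\<lambda>c. c * _"] cong: if_cong)
    finally show ?thesis by (cases "k = i") (simp_all add: inner_vec_def axis_def)
  qed
  then show ?thesis by (simp add: vec_eq_iff)
qed

lemma det_shear_matrix:
  fixes a :: "real^'k"
  assumes ai: "a $ i = 0"
  shows "det (shear_matrix i a) = 1"
proof -
  have rowI: "row j (mat 1 :: real^'k^'k) = axis j 1" for j
    by (simp add: row_def mat_def axis_def vec_eq_iff)
  have "a = (\<Sum>j\<in>UNIV - {i}. a$j *s axis j 1)"
  proof -
    have "(\<Sum>j\<in>UNIV - {i}. a$j *s axis j 1)$k = (\<Sum>j\<in>UNIV - {i}. if j = k then a$k else 0)" for k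
      by (simp add: sum_component axis_def if_distrib[of "\<lambda>c. _ * c"] cong: if_cong)
    then have "(\<Sum>j\<in>UNIV - {i}. a$j *s axis j 1)$k = a$k" for k
      using ai by (cases "k = i") auto
    then show ?thesis by (simp add: vec_eq_iff)
  qed
  moreover have "(\<Sum>j\<in>UNIV - {i}. a$j *s axis j 1) \<in> vec.span {row j (mat 1 :: real^'k^'k) |j. j \<noteq> i}"
    by (intro vec.span_sum vec.span_scale vec.span_base) (auto simp: rowI)
  ultimately have "a \<in> vec.span {row j (mat 1 :: real^'k^'k) |j. j \<noteq> i}" by simp
  then have "det (\<chi> k. if k = i then row i (mat 1) + a else row k (mat 1)) = det (mat 1 :: real^'k^'k)"
    by (rule det_row_span)
  moreover have "shear_matrix i a = (\<chi> k. if k = i then row i (mat 1) + a else row k (mat 1))"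
    by (simp add: shear_matrix_def vec_eq_iff rowI axis_def)
  ultimately show ?thesis by simp
qed

text \<open>Fubini along the \<open>i\<close>-th coordinate; the right-hand side does not depend on \<open>a\<close>
  because the inner integral is translation invariant.\<close>
lemma nn_integral_lborel_shear_iterated:
  fixes g :: "real^'k \<Rightarrow> ennreal" and a :: "real^'k"
  assumes g[measurable]: "g \<in> borel_measurable borel" and ai: "a $ i = 0"
  defines "b0 \<equiv> axis i (1::real)"
  defines "I \<equiv> (Basis :: (real^'k) set) - {b0}"
  shows "(\<integral>\<^sup>+x. g (shear_matrix i a *v x) \<partial>lborel) =
     (\<integral>\<^sup>+x. (\<integral>\<^sup>+y. g ((\<Sum>b\<in>I. x b *\<^sub>R b) + y *\<^sub>R b0) \<partial>lborel) \<partial>(Pi\<^sub>M I (\<lambda>_. lborel)))"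
proof -
  interpret product_sigma_finite "\<lambda>_. lborel" by standard
  have BI: "(Basis :: (real^'k) set) = insert b0 I" by (auto simp: I_def b0_def)
  have finI: "finite I" "b0 \<notin> I" by (auto simp: I_def)
  define T where "T x = x + (a \<bullet> x) *\<^sub>R b0" for x :: "real^'k"
  have [measurable]: "T \<in> borel_measurable borel" unfolding T_def by measurable
  have "(\<integral>\<^sup>+x. g (T x) \<partial>lborel) = (\<integral>\<^sup>+f. g (T (\<Sum>b\<in>Basis. f b *\<^sub>R b)) \<partial>(Pi\<^sub>M (insert b0 I) (\<lambda>_. lborel)))"
    by (subst lborel_eq) (simp add: nn_integral_distr BI)
  also have "\<dots> = (\<integral>\<^sup>+x. (\<integral>\<^sup>+y. g (T (\<Sum>b\<in>Basis. (x(b0 := y)) b *\<^sub>R b)) \<partial>lborel) \<partial>(Pi\<^sub>M I (\<lambda>_. lborel)))"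
    by (rule product_nn_integral_insert[OF finI]) (simp add: BI[symmetric])
  also have "\<dots> = (\<integral>\<^sup>+x. (\<integral>\<^sup>+y. g ((\<Sum>b\<in>I. x b *\<^sub>R b) + y *\<^sub>R b0) \<partial>lborel) \<partial>(Pi\<^sub>M I (\<lambda>_. lborel)))"
  proof (rule nn_integral_cong)
    fix x :: "real^'k \<Rightarrow> real"
    define v where "v = (\<Sum>b\<in>I. x b *\<^sub>R b)"
    have "(\<Sum>b\<in>I. (x(b0 := y)) b *\<^sub>R b) = v" for y
      unfolding v_def by (rule sum.cong) (use finI in auto)
    then have sum_eq: "(\<Sum>b\<in>Basis. (x(b0 := y)) b *\<^sub>R b) = y *\<^sub>R b0 + v" for y
      using finI by (simp add: BI)
    have "a \<bullet> b0 = 0" using ai by (simp add: b0_def inner_axis)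
    then have "T (y *\<^sub>R b0 + v) = v + (y + a \<bullet> v) *\<^sub>R b0" for y
      by (simp add: T_def inner_add_right algebra_simps scaleR_add_left)
    then have "(\<integral>\<^sup>+y. g (T (\<Sum>b\<in>Basis. (x(b0 := y)) b *\<^sub>R b)) \<partial>lborel) = (\<integral>\<^sup>+y. g (v + (y + a \<bullet> v) *\<^sub>R b0) \<partial>lborel)"
      by (simp only: sum_eq)
    also have "\<dots> = (\<integral>\<^sup>+y. g (v + y *\<^sub>R b0) \<partial>lborel)"
      using nn_integral_real_affine[of "\<lambda>y. g (v + y *\<^sub>R b0)" 1 "a \<bullet> v"] by (simp add: add.commute)
    finally show "(\<integral>\<^sup>+y. g (T (\<Sum>b\<in>Basis. (x(b0 := y)) b *\<^sub>R b)) \<partial>lborel) =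
        (\<integral>\<^sup>+y. g ((\<Sum>b\<in>I. x b *\<^sub>R b) + y *\<^sub>R b0) \<partial>lborel)" by (simp add: v_def)
  qed
  finally show ?thesis by (simp add: T_def b0_def shear_matrix_mult)
qed

lemma nn_integral_lborel_shear:
  fixes g :: "real^'k \<Rightarrow> ennreal"
  assumes "g \<in> borel_measurable borel" and "a $ i = 0"
  shows "(\<integral>\<^sup>+x. g (shear_matrix i a *v x) \<partial>lborel) = (\<integral>\<^sup>+x. g x \<partial>lborel)"
  using nn_integral_lborel_shear_iterated[OF assms] nn_integral_lborel_shear_iterated[OF assms(1), of 0 i]
  by (simp add: shear_matrix_mult)

lemma pos_def_congruence:
  assumes H: "pos_def H" and E: "invertible E"
  shows "pos_def (transpose E ** H ** E)"
proof -
  have "transpose H = H" using H by (simp add: pos_def_def)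
  then have "transpose (transpose E ** H ** E) = transpose E ** H ** E"
    by (simp only: matrix_transpose_mul transpose_transpose matrix_mul_assoc)
  moreover have "0 < x \<bullet> ((transpose E ** H ** E) *v x)" if "x \<noteq> 0" for x
  proof -
    obtain E' where "E' ** E = mat 1" using E by (auto simp: invertible_def)
    then have "E' *v (E *v x) = x" by (simp add: matrix_vector_mul_assoc)
    then have "E *v x \<noteq> 0" using that by auto
    then have "0 < (E *v x) \<bullet> (H *v (E *v x))" using H by (simp add: pos_def_def)
    also have "\<dots> = x \<bullet> ((transpose E ** H ** E) *v x)"
      by (simp only: inner_matrix_vector_transpose matrix_vector_mul_assoc matrix_mul_assoc)
    finally show ?thesis .
  qed
  ultimately show ?thesis by (simp add: pos_def_def)
qed

lemma shear_clears_row: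
  fixes H :: "real^'k^'k" and i :: 'k
  assumes H: "pos_def H" and diagS: "\<forall>k\<in>S. \<forall>l. l \<noteq> k \<longrightarrow> H$k$l = 0"
  defines "a \<equiv> \<chi> l. if l = i then 0 else - H$i$l / H$i$i"
  defines "E \<equiv> shear_matrix i a"
  shows "\<forall>k\<in>insert i S. \<forall>l. l \<noteq> k \<longrightarrow> (transpose E ** H ** E)$k$l = 0"
proof (intro ballI allI impI)
  fix k l assume k: "k \<in> insert i S" and lk: "l \<noteq> k"
  have sym: "transpose H = H" using H by (simp add: pos_def_def)
  note Hsym = symmetric_matrix_entry[OF sym] and d = pos_def_diag_pos[OF H, of i]
  have Eaxis: "E *v axis l 1 = axis l 1 + (a$l) *\<^sub>R axis i 1" for l
    by (simp add: E_def shear_matrix_mult inner_axis)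
  have entry: "(transpose E ** H ** E)$k$l = (E *v axis k 1) \<bullet> (H *v (E *v axis l 1))"
    by (simp only: matrix_entry_eq_inner_axis inner_matrix_vector_transpose matrix_vector_mul_assoc matrix_mul_assoc)
  show "(transpose E ** H ** E)$k$l = 0"
  proof (cases "k = i")
    case True
    have "(transpose E ** H ** E)$k$l = (axis i 1 + a$i *\<^sub>R axis i 1) \<bullet> (H *v (axis l 1 + (a$l) *\<^sub>R axis i 1))"
      using entry True by (simp only: Eaxis)
    also have "\<dots> = axis i 1 \<bullet> (H *v (axis l 1 + (a$l) *\<^sub>R axis i 1))" by (simp add: a_def)
    also have "\<dots> = H$i$l + a$l * H$i$i"
      by (simp add: matrix_vector_right_distrib matrix_vector_mult_scaleR inner_add_right
          matrix_entry_eq_inner_axis)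
    also have "\<dots> = 0" using lk True d by (simp add: a_def)
    finally show ?thesis .
  next
    case False
    then have kS: "k \<in> S" using k by simp
    have "a$k = 0" using False diagS kS Hsym[of i k] by (simp add: a_def)
    then have "(transpose E ** H ** E)$k$l = axis k 1 \<bullet> (H *v (E *v axis l 1))"
      using entry by (simp add: Eaxis[of k])
    also have "\<dots> = (E *v axis l 1) \<bullet> (H *v axis k 1)" by (rule inner_matrix_vector_symmetric[OF sym])
    also have "H *v axis k 1 = H$k$k *\<^sub>R axis k 1"
    proof -
      have "(H *v axis k 1)$m = H$m$k" for m by (simp add: matrix_vector_mult_basis column_def)
      then show ?thesis using diagS kS Hsym by (auto simp: vec_eq_iff axis_def)
    qed
    also have "(E *v axis l 1) \<bullet> (H$k$k *\<^sub>R axis k 1) = H$k$k * (E *v axis l 1)$k"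
      by (simp add: inner_axis)
    also have "(E *v axis l 1)$k = 0" unfolding Eaxis using lk False by (simp add: axis_def)
    finally show ?thesis by simp
  qed
qed

text \<open>Induction on the number of rows of \<open>H\<close> that are not yet diagonal: a shear of determinant 1
  clears one more row and preserves the Gaussian integral.\<close>
lemma gaussian_integral_induct:
  fixes H :: "real^'k^'k"
  shows "card (UNIV - S) = N \<Longrightarrow> pos_def H \<Longrightarrow> (\<forall>k\<in>S. \<forall>l. l \<noteq> k \<longrightarrow> H$k$l = 0) \<Longrightarrow>
    det H > 0 \<and>
    (\<integral>\<^sup>+x. ennreal (exp (- (x \<bullet> (H *v x)) / 2)) \<partial>lborel) = ennreal (sqrt ((2*pi)^CARD('k) / det H))"
proof (induction N arbitrary: S H)
  case 0
  then have "S = UNIV" by auto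
  then have diag: "H$i$j = 0" if "i \<noteq> j" for i j using 0(3) that by auto
  have pos: "H$i$i > 0" for i using 0(2) by (rule pos_def_diag_pos)
  then have "det H > 0" by (simp add: det_diagonal[OF diag] prod_pos)
  then show ?case using nn_integral_exp_diagonal_quadratic_form[OF diag pos] by simp
next
  case (Suc N)
  then have "UNIV - S \<noteq> {}" by (metis card.empty nat.distinct(1))
  then obtain i where iS: "i \<notin> S" by blast
  define a :: "real^'k" where "a = (\<chi> l. if l = i then 0 else - H$i$l / H$i$i)"
  define E where "E = shear_matrix i a"
  define H' where "H' = transpose E ** H ** E"
  have ai: "a$i = 0" by (simp add: a_def)
  have detE: "det E = 1" unfolding E_def by (rule det_shear_matrix[OF ai])
  then have "invertible E" by (simp add: invertible_det_nz)
  then have pdH': "pos_def H'" unfolding H'_def using Suc.prems(2) by (rule pos_def_congruence[rotated])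
  have diagH': "\<forall>k\<in>insert i S. \<forall>l. l \<noteq> k \<longrightarrow> H'$k$l = 0"
    unfolding H'_def E_def a_def using shear_clears_row[OF Suc.prems(2,3)] by blast
  have "card (UNIV - insert i S) = N" using Suc.prems(1) iS
    by (metis Diff_insert card_Diff_singleton diff_Suc_1 finite UNIV_I DiffI)
  note IH = Suc.IH[OF this pdH' diagH']
  have "det H' = det H" by (simp add: H'_def det_mul detE)
  moreover have "(\<integral>\<^sup>+x. ennreal (exp (- (x \<bullet> (H *v x)) / 2)) \<partial>lborel)
      = (\<integral>\<^sup>+x. ennreal (exp (- ((E *v x) \<bullet> (H *v (E *v x))) / 2)) \<partial>lborel)"
    unfolding E_def by (rule nn_integral_lborel_shear[OF _ ai, symmetric]) measurable
  moreover have "(E *v x) \<bullet> (H *v (E *v x)) = x \<bullet> (H' *v x)" for x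
    by (simp only: H'_def inner_matrix_vector_transpose matrix_vector_mul_assoc matrix_mul_assoc)
  ultimately show ?case using IH by simp
qed

lemma det_pos_def_pos: "pos_def H \<Longrightarrow> det H > 0"
  for H :: "real^'k^'k"
  using gaussian_integral_induct[where S = "{} :: 'k set", OF refl] by simp

lemma nn_integral_exp_quadratic_form:
  "pos_def H \<Longrightarrow>
    (\<integral>\<^sup>+x. ennreal (exp (- (x \<bullet> (H *v x)) / 2)) \<partial>lborel) = ennreal (sqrt ((2*pi)^CARD('k) / det H))"
  for H :: "real^'k^'k"
  using gaussian_integral_induct[where S = "{} :: 'k set", OF refl] by simp

lemma borel_measurable_gauss_density [measurable]: "gauss_density mu S \<in> borel_measurable borel"
  unfolding gauss_density_def by measurable

lemma gauss_density_pos: "pos_def S \<Longrightarrow> gauss_density mu S x > 0"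
  by (simp add: gauss_density_def det_pos_def_pos)

lemma nn_integral_gauss_density:
  fixes S :: "real^'k^'k"
  assumes S: "pos_def S"
  shows "(\<integral>\<^sup>+x. ennreal (gauss_density mu S x) \<partial>lborel) = 1"
proof -
  define H where "H = matrix_inv S"
  define c where "c = sqrt ((2 * pi) ^ CARD('k) * det S)"
  have H: "pos_def H" unfolding H_def by (rule pos_def_matrix_inv[OF S])
  have "det S > 0" by (rule det_pos_def_pos[OF S])
  then have c: "c > 0" and detH: "det H = 1 / det S"
    by (simp_all add: c_def H_def det_matrix_inv pos_def_invertible[OF S])
  have "gauss_density mu S x = exp (- ((x - mu) \<bullet> (H *v (x - mu))) / 2) * (1 / c)" for x
    by (simp add: gauss_density_def H_def c_def)
  then have "ennreal (gauss_density mu S x) = ennreal (exp (- ((x - mu) \<bullet> (H *v (x - mu))) / 2)) * ennreal (1 / c)" for x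
    using c by (simp only: ennreal_mult exp_ge_zero less_imp_le divide_nonneg_pos zero_less_one)
  then have "(\<integral>\<^sup>+x. ennreal (gauss_density mu S x) \<partial>lborel)
      = (\<integral>\<^sup>+x. ennreal (exp (- ((x - mu) \<bullet> (H *v (x - mu))) / 2)) * ennreal (1 / c) \<partial>lborel)"
    by simp
  also have "\<dots> = (\<integral>\<^sup>+x. ennreal (exp (- ((x - mu) \<bullet> (H *v (x - mu))) / 2)) \<partial>lborel) * ennreal (1 / c)"
    by (rule nn_integral_multc) measurable
  also have "(\<integral>\<^sup>+x. ennreal (exp (- ((x - mu) \<bullet> (H *v (x - mu))) / 2)) \<partial>lborel)
      = ennreal (sqrt ((2 * pi) ^ CARD('k) / det H))"
    using nn_integral_lborel_translate[of "\<lambda>v. ennreal (exp (- (v \<bullet> (H *v v)) / 2))" mu]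
      nn_integral_exp_quadratic_form[OF H] by simp
  also have "sqrt ((2 * pi) ^ CARD('k) / det H) = c" by (simp add: detH c_def)
  also have "ennreal c * ennreal (1 / c) = 1" using c by (simp flip: ennreal_mult)
  finally show ?thesis .
qed

lemma nn_integral_gauss_mixture:
  fixes S :: "real^'k^'k"
  assumes S: "pos_def S" and c: "\<And>j. j \<in> I \<Longrightarrow> c j \<ge> 0"
  shows "(\<integral>\<^sup>+x. ennreal (\<Sum>j\<in>I. c j * gauss_density (m j) S x) \<partial>lborel) = ennreal (\<Sum>j\<in>I. c j)"
proof -
  have "ennreal (\<Sum>j\<in>I. c j * gauss_density (m j) S x) = (\<Sum>j\<in>I. ennreal (c j) * ennreal (gauss_density (m j) S x))"
    for x using c gauss_density_pos[OF S] by (simp add: sum_ennreal[symmetric] ennreal_mult less_imp_le)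
  then have "(\<integral>\<^sup>+x. ennreal (\<Sum>j\<in>I. c j * gauss_density (m j) S x) \<partial>lborel)
      = (\<Sum>j\<in>I. ennreal (c j) * (\<integral>\<^sup>+x. ennreal (gauss_density (m j) S x) \<partial>lborel))"
    by (simp add: nn_integral_sum nn_integral_cmult)
  also have "\<dots> = ennreal (\<Sum>j\<in>I. c j)"
    using c by (simp add: nn_integral_gauss_density[OF S] sum_ennreal)
  finally show ?thesis .
qed

lemma prob_space_gauss_measure: "pos_def S \<Longrightarrow> prob_space (gauss_measure mu S)"
  by (rule prob_spaceI) (simp add: gauss_measure_def emeasure_density nn_integral_gauss_density)

lemma gauss_density_isotropic:
  fixes mu x :: "real^'k" and c :: real
  assumes c: "c > 0"
  shows "gauss_density mu (c *\<^sub>R mat 1) x =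
    exp (- (norm (x - mu))\<^sup>2 / (2 * c)) / sqrt ((2 * pi) ^ CARD('k) * c ^ CARD('k))"
proof -
  have inv: "matrix_inv (c *\<^sub>R mat 1 :: real^'k^'k) = (1/c) *\<^sub>R mat 1"
    by (rule matrix_inv_unique) (use c in \<open>simp add: matrix_scalar_ac\<close>)
  have "det (c *\<^sub>R mat 1 :: real^'k^'k) = c ^ CARD('k)"
    by (subst det_diagonal) (simp_all add: mat_def)
  moreover have "(x - mu) \<bullet> (matrix_inv (c *\<^sub>R mat 1) *v (x - mu)) = (norm (x - mu))\<^sup>2 / c"
    by (simp add: inv power2_norm_eq_inner flip: scaleR_matrix_vector_assoc)
  ultimately show ?thesis by (simp add: gauss_density_def field_simps)
qed

lemma gauss_density_psd_sqrt:
  fixes S :: "real^'k^'k"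
  assumes "pos_def S"
  shows "gauss_density mu S y =
    exp (- (norm (psd_sqrt (matrix_inv S) *v (y - mu)))\<^sup>2 / 2) / sqrt ((2 * pi) ^ CARD('k) * det S)"
  using norm_psd_sqrt_mult_squared[OF pos_def_imp_pos_semidef[OF pos_def_matrix_inv[OF assms]]]
  by (simp add: gauss_density_def)

section \<open>Finite mixtures\<close>

lemma measure_density_mixture:
  fixes N :: "'a measure" and q :: "'i \<Rightarrow> 'a \<Rightarrow> real"
  assumes I: "finite I" and p: "\<And>j. j \<in> I \<Longrightarrow> p j \<ge> 0"
    and q_meas: "\<And>j. j \<in> I \<Longrightarrow> q j \<in> borel_measurable N" and q_nonneg: "\<And>j x. j \<in> I \<Longrightarrow> q j x \<ge> 0"
    and q_prob: "\<And>j. j \<in> I \<Longrightarrow> prob_space (density N (\<lambda>x. ennreal (q j x)))"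
    and B: "B \<in> sets N"
  shows "measure (density N (\<lambda>x. ennreal (\<Sum>j\<in>I. p j * q j x))) B
    = (\<Sum>j\<in>I. p j * measure (density N (\<lambda>x. ennreal (q j x))) B)"
proof -
  let ?Q = "\<lambda>j. density N (\<lambda>x. ennreal (q j x))"
  have "emeasure (density N (\<lambda>x. ennreal (\<Sum>j\<in>I. p j * q j x))) B
      = (\<integral>\<^sup>+x. (\<Sum>j\<in>I. ennreal (p j) * (ennreal (q j x) * indicator B x)) \<partial>N)"
  proof -
    have "ennreal (\<Sum>j\<in>I. p j * q j x) = (\<Sum>j\<in>I. ennreal (p j) * ennreal (q j x))" for x
      using p q_nonneg by (simp add: sum_ennreal[symmetric] ennreal_mult)
    then show ?thesis using B q_meas I
      by (subst emeasure_density) (auto simp: sum_distrib_right mult.assoc intro!: borel_measurable_sum)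
  qed
  also have "\<dots> = (\<Sum>j\<in>I. ennreal (p j) * emeasure (?Q j) B)"
    using B q_meas by (subst nn_integral_sum) (auto simp: nn_integral_cmult emeasure_density)
  also have "\<dots> = ennreal (\<Sum>j\<in>I. p j * measure (?Q j) B)"
    using p by (simp add: finite_measure.emeasure_eq_measure[OF prob_space.axioms(1)[OF q_prob]]
        ennreal_mult sum_ennreal[symmetric])
  finally show ?thesis
    using p by (simp add: measure_def sum_nonneg)
qed

lemma tv_dist_mixture_component_le:
  fixes N :: "'a measure" and q :: "'i \<Rightarrow> 'a \<Rightarrow> real"
  assumes I: "finite I" "j0 \<in> I"
    and p: "\<And>j. j \<in> I \<Longrightarrow> p j \<ge> 0" "(\<Sum>j\<in>I. p j) = 1"
    and q_meas: "\<And>j. j \<in> I \<Longrightarrow> q j \<in> borel_measurable N" and q_nonneg: "\<And>j x. j \<in> I \<Longrightarrow> q j x \<ge> 0"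
    and q_prob: "\<And>j. j \<in> I \<Longrightarrow> prob_space (density N (\<lambda>x. ennreal (q j x)))"
  shows "tv_dist (density N (\<lambda>x. ennreal (\<Sum>j\<in>I. p j * q j x))) (density N (\<lambda>x. ennreal (q j0 x)))
    \<le> (\<Sum>j\<in>I - {j0}. p j)"
  unfolding tv_dist_def
proof (rule cSUP_least)
  show "sets (density N (\<lambda>x. ennreal (\<Sum>j\<in>I. p j * q j x))) \<noteq> {}" by auto
next
  fix B assume "B \<in> sets (density N (\<lambda>x. ennreal (\<Sum>j\<in>I. p j * q j x)))"
  then have B: "B \<in> sets N" by simp
  define \<nu> where "\<nu> j = measure (density N (\<lambda>x. ennreal (q j x))) B" for j
  have \<nu>: "0 \<le> \<nu> j" "\<nu> j \<le> 1" if "j \<in> I" for j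
    unfolding \<nu>_def using prob_space.prob_le_1[OF q_prob[OF that]] by auto
  have "(\<Sum>j\<in>I. p j * \<nu> j) - \<nu> j0 = (\<Sum>j\<in>I. p j * (\<nu> j - \<nu> j0))"
    using p(2) by (simp add: right_diff_distrib sum_subtractf flip: sum_distrib_right)
  also have "\<dots> = (\<Sum>j\<in>I - {j0}. p j * (\<nu> j - \<nu> j0))"
    using I by (simp add: sum.remove)
  finally have "\<bar>(\<Sum>j\<in>I. p j * \<nu> j) - \<nu> j0\<bar> \<le> (\<Sum>j\<in>I - {j0}. \<bar>p j * (\<nu> j - \<nu> j0)\<bar>)"
    by (simp only: sum_abs)
  also have "\<dots> \<le> (\<Sum>j\<in>I - {j0}. p j)"
  proof (rule sum_mono)
    fix j assume j: "j \<in> I - {j0}"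
    have "\<bar>\<nu> j - \<nu> j0\<bar> \<le> 1" using \<nu>[of j] \<nu>[OF I(2)] j by auto
    then show "\<bar>p j * (\<nu> j - \<nu> j0)\<bar> \<le> p j" using p(1)[of j] j by (simp add: abs_mult mult_left_le)
  qed
  finally show "\<bar>measure (density N (\<lambda>x. ennreal (\<Sum>j\<in>I. p j * q j x))) B
      - measure (density N (\<lambda>x. ennreal (q j0 x))) B\<bar> \<le> (\<Sum>j\<in>I - {j0}. p j)"
    by (simp add: measure_density_mixture[OF I(1) p(1) q_meas q_nonneg q_prob B] \<nu>_def)
qed

lemma mixture_weight_tail_le:
  fixes w s :: "'i \<Rightarrow> real"
  assumes I: "finite I" "j0 \<in> I"
    and w_pos: "\<And>j. j \<in> I \<Longrightarrow> w j > 0" and ratio: "\<And>j. j \<in> I \<Longrightarrow> w j / w j0 \<le> C"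
    and gap: "\<And>j. j \<in> I \<Longrightarrow> j \<noteq> j0 \<Longrightarrow> s j - s j0 \<ge> d"
  shows "(\<Sum>j\<in>I - {j0}. w j * exp (- s j) / (\<Sum>i\<in>I. w i * exp (- s i))) \<le> C * real (card I) * exp (- d)"
proof -
  define W where "W j = w j * exp (- s j)" for j
  have W_pos: "W j > 0" if "j \<in> I" for j using w_pos[OF that] by (simp add: W_def)
  have "W j0 \<le> (\<Sum>i\<in>I. W i)" using I W_pos by (intro member_le_sum) (auto simp: less_imp_le)
  moreover have "0 < W j0" using W_pos I(2) .
  ultimately have sum_pos: "0 < (\<Sum>i\<in>I. W i) * W j0" by simp
  have "C \<ge> 0" using ratio[OF I(2)] w_pos[OF I(2)] by simp
  have each: "W j / (\<Sum>i\<in>I. W i) \<le> C * exp (- d)" if j: "j \<in> I - {j0}" for j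
  proof -
    have "W j / (\<Sum>i\<in>I. W i) \<le> W j / W j0"
      using W_pos j \<open>W j0 \<le> _\<close> sum_pos by (intro divide_left_mono) (auto simp: less_imp_le)
    also have "\<dots> = (w j / w j0) * exp (- (s j - s j0))"
      by (simp add: W_def exp_diff exp_minus field_simps)
    also have "\<dots> \<le> C * exp (- d)"
      using ratio[of j] gap[of j] j \<open>C \<ge> 0\<close> by (intro mult_mono) auto
    finally show ?thesis .
  qed
  have "(\<Sum>j\<in>I - {j0}. W j / (\<Sum>i\<in>I. W i)) \<le> real (card (I - {j0})) * (C * exp (- d))"
    using each by (rule sum_bounded_above)
  also have "\<dots> \<le> real (card I) * (C * exp (- d))"
    using I \<open>C \<ge> 0\<close> by (intro mult_right_mono) (auto intro: card_mono)
  finally show ?thesis by (simp add: W_def mult_ac)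
qed

section \<open>The linear Gaussian model\<close>

locale linear_gaussian_model =
  fixes A :: "real^'n^'m" and \<sigma> \<tau> :: real
  assumes sigma_pos: "\<sigma> > 0" and tau_pos: "\<tau> > 0"
begin

definition marginal_cov :: "real^'m^'m" where
  "marginal_cov = \<sigma>\<^sup>2 *\<^sub>R mat 1 + \<tau>\<^sup>2 *\<^sub>R (A ** transpose A)"

definition post_prec :: "real^'n^'n" where
  "post_prec = (1/\<tau>\<^sup>2) *\<^sub>R mat 1 + (1/\<sigma>\<^sup>2) *\<^sub>R (transpose A ** A)"

definition post_cov :: "real^'n^'n" where
  "post_cov = \<tau>\<^sup>2 *\<^sub>R mat 1 - \<tau>^4 *\<^sub>R (transpose A ** matrix_inv marginal_cov ** A)"

definition post_mean :: "real^'n \<Rightarrow> real^'m \<Rightarrow> real^'n" where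
  "post_mean mu y = mu + \<tau>\<^sup>2 *\<^sub>R (transpose A *v (matrix_inv marginal_cov *v (y - A *v mu)))"

lemma marginal_cov_mult: "marginal_cov *v x = \<sigma>\<^sup>2 *\<^sub>R x + \<tau>\<^sup>2 *\<^sub>R (A *v (transpose A *v x))"
  by (simp add: marginal_cov_def matrix_vector_mult_add_rdistrib
      flip: scaleR_matrix_vector_assoc matrix_vector_mul_assoc)

lemma post_prec_mult: "post_prec *v x = (1/\<tau>\<^sup>2) *\<^sub>R x + (1/\<sigma>\<^sup>2) *\<^sub>R (transpose A *v (A *v x))"
  by (simp add: post_prec_def matrix_vector_mult_add_rdistrib
      flip: scaleR_matrix_vector_assoc matrix_vector_mul_assoc)

lemma pos_def_marginal_cov: "pos_def marginal_cov"
  using pos_def_identity_plus_gram[of "\<sigma>\<^sup>2" "\<tau>\<^sup>2" "transpose A"] sigma_pos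
  by (simp add: marginal_cov_def)

lemma pos_def_post_prec: "pos_def post_prec"
  using pos_def_identity_plus_gram[of "1/\<tau>\<^sup>2" "1/\<sigma>\<^sup>2" A] tau_pos
  by (simp add: post_prec_def)

lemma A_transpose_A_marginal_cov_inv:
  "A *v (transpose A *v (matrix_inv marginal_cov *v r)) = (1/\<tau>\<^sup>2) *\<^sub>R (r - \<sigma>\<^sup>2 *\<^sub>R (matrix_inv marginal_cov *v r))"
proof (rule scaleR_add_eq_imp_eq)
  have "marginal_cov *v (matrix_inv marginal_cov *v r) = r"
    by (simp add: matrix_vector_mul_assoc matrix_inv_right[OF pos_def_invertible[OF pos_def_marginal_cov]])
  then show "\<sigma>\<^sup>2 *\<^sub>R (matrix_inv marginal_cov *v r) + \<tau>\<^sup>2 *\<^sub>R (A *v (transpose A *v (matrix_inv marginal_cov *v r))) = r"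
    by (simp only: marginal_cov_mult)
qed (use tau_pos in simp)

lemma post_cov_mult: "post_cov *v x = \<tau>\<^sup>2 *\<^sub>R x - \<tau>^4 *\<^sub>R (transpose A *v (matrix_inv marginal_cov *v (A *v x)))"
  by (simp add: post_cov_def matrix_vector_mult_diff_rdistrib
      flip: scaleR_matrix_vector_assoc matrix_vector_mul_assoc)

lemma post_cov_mult_post_prec: "post_cov ** post_prec = mat 1"
proof -
  define Si where "Si = matrix_inv marginal_cov"
  have SiA: "Si *v (A *v (transpose A *v z)) = (1/\<tau>\<^sup>2) *\<^sub>R (z - \<sigma>\<^sup>2 *\<^sub>R (Si *v z))" for z
  proof -
    have "Si *v (marginal_cov *v z) = z"
      by (simp add: Si_def matrix_vector_mul_assoc matrix_inv_left[OF pos_def_invertible[OF pos_def_marginal_cov]])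
    then have "\<sigma>\<^sup>2 *\<^sub>R (Si *v z) + \<tau>\<^sup>2 *\<^sub>R (Si *v (A *v (transpose A *v z))) = z"
      by (simp add: marginal_cov_mult matrix_vector_right_distrib matrix_vector_mult_scaleR)
    then show ?thesis by (rule scaleR_add_eq_imp_eq) (use tau_pos in simp)
  qed
  have "post_cov *v (post_prec *v x) = x" for x
  proof -
    have "Si *v (A *v (post_prec *v x))
        = (1/\<tau>\<^sup>2) *\<^sub>R (Si *v (A *v x)) + (1/\<sigma>\<^sup>2) *\<^sub>R (Si *v (A *v (transpose A *v (A *v x))))"
      by (simp add: post_prec_mult matrix_vector_right_distrib matrix_vector_mult_scaleR)
    also have "\<dots> = (1/(\<sigma>\<^sup>2 * \<tau>\<^sup>2)) *\<^sub>R (A *v x)"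
      using sigma_pos by (simp add: SiA algebra_simps)
    finally have "Si *v (A *v (post_prec *v x)) = (1/(\<sigma>\<^sup>2 * \<tau>\<^sup>2)) *\<^sub>R (A *v x)" .
    then have "post_cov *v (post_prec *v x)
        = \<tau>\<^sup>2 *\<^sub>R (post_prec *v x) - (\<tau>^4 / (\<sigma>\<^sup>2 * \<tau>\<^sup>2)) *\<^sub>R (transpose A *v (A *v x))"
      by (simp add: post_cov_mult Si_def[symmetric] matrix_vector_mult_scaleR)
    also have "\<tau>^4 / (\<sigma>\<^sup>2 * \<tau>\<^sup>2) = \<tau>\<^sup>2 / \<sigma>\<^sup>2"
      using tau_pos by (simp add: power4_eq_xxxx power2_eq_square)
    also have "\<tau>\<^sup>2 *\<^sub>R (post_prec *v x) - (\<tau>\<^sup>2 / \<sigma>\<^sup>2) *\<^sub>R (transpose A *v (A *v x)) = x"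
      using tau_pos by (simp add: post_prec_mult scaleR_add_right)
    finally show ?thesis .
  qed
  then show ?thesis by (simp add: matrix_eq flip: matrix_vector_mul_assoc)
qed

lemma matrix_inv_post_cov: "matrix_inv post_cov = post_prec"
  by (rule matrix_inv_unique[OF post_cov_mult_post_prec])

lemma post_prec_mult_post_mean_shift:
  "post_prec *v (post_mean mu y - mu) = (1/\<sigma>\<^sup>2) *\<^sub>R (transpose A *v (y - A *v mu))"
proof -
  define r where "r = y - A *v mu"
  define Si where "Si = matrix_inv marginal_cov"
  define w where "w = transpose A *v (Si *v r)"
  have "post_prec *v (post_mean mu y - mu) = \<tau>\<^sup>2 *\<^sub>R ((1/\<tau>\<^sup>2) *\<^sub>R w + (1/\<sigma>\<^sup>2) *\<^sub>R (transpose A *v (A *v w)))"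
    by (simp only: post_mean_def r_def Si_def w_def add_diff_cancel_left' matrix_vector_mult_scaleR post_prec_mult)
  also have "A *v w = (1/\<tau>\<^sup>2) *\<^sub>R (r - \<sigma>\<^sup>2 *\<^sub>R (Si *v r))"
    unfolding w_def Si_def by (rule A_transpose_A_marginal_cov_inv)
  also have "transpose A *v ((1/\<tau>\<^sup>2) *\<^sub>R (r - \<sigma>\<^sup>2 *\<^sub>R (Si *v r))) = (1/\<tau>\<^sup>2) *\<^sub>R (transpose A *v r - \<sigma>\<^sup>2 *\<^sub>R w)"
    by (simp only: w_def matrix_vector_mult_scaleR matrix_vector_mult_diff_distrib)
  also have "\<tau>\<^sup>2 *\<^sub>R ((1/\<tau>\<^sup>2) *\<^sub>R w + (1/\<sigma>\<^sup>2) *\<^sub>R ((1/\<tau>\<^sup>2) *\<^sub>R (transpose A *v r - \<sigma>\<^sup>2 *\<^sub>R w)))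
      = (1/\<sigma>\<^sup>2) *\<^sub>R (transpose A *v r)"
    using sigma_pos tau_pos by (simp add: scaleR_add_right scaleR_diff_right)
  finally show ?thesis by (simp only: r_def)
qed

lemma pos_def_post_cov: "pos_def post_cov"
proof -
  have inv: "invertible post_prec" by (rule pos_def_invertible[OF pos_def_post_prec])
  have "post_cov = (post_cov ** post_prec) ** matrix_inv post_prec"
    by (simp add: matrix_inv_right[OF inv] flip: matrix_mul_assoc)
  then have "post_cov = matrix_inv post_prec" by (simp add: post_cov_mult_post_prec)
  then show ?thesis using pos_def_matrix_inv[OF pos_def_post_prec] by simp
qed

lemma completing_the_square:
  "(norm (x - mu))\<^sup>2 / \<tau>\<^sup>2 + (norm (y - A *v x))\<^sup>2 / \<sigma>\<^sup>2
    = (x - post_mean mu y) \<bullet> (post_prec *v (x - post_mean mu y))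
      + (y - A *v mu) \<bullet> (matrix_inv marginal_cov *v (y - A *v mu))"
proof -
  define r where "r = y - A *v mu"
  define Si where "Si = matrix_inv marginal_cov"
  define u where "u = x - mu"
  define p where "p = post_mean mu y - mu"
  have sym: "transpose post_prec = post_prec" using pos_def_post_prec by (simp add: pos_def_def)
  have tr: "a \<bullet> (transpose A *v b) = (A *v a) \<bullet> b" for a b
    by (simp add: inner_matrix_vector_transpose)
  have Hp: "post_prec *v p = (1/\<sigma>\<^sup>2) *\<^sub>R (transpose A *v r)"
    unfolding p_def r_def by (rule post_prec_mult_post_mean_shift)
  have uHu: "u \<bullet> (post_prec *v u) = (1/\<tau>\<^sup>2) * (u \<bullet> u) + (1/\<sigma>\<^sup>2) * ((A *v u) \<bullet> (A *v u))"
    by (simp add: post_prec_mult inner_add_right tr)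
  have uHp: "u \<bullet> (post_prec *v p) = (1/\<sigma>\<^sup>2) * ((A *v u) \<bullet> r)" by (simp add: Hp tr)
  have "p \<bullet> (post_prec *v p) = (1/\<sigma>\<^sup>2) * ((A *v p) \<bullet> r)" by (simp add: Hp tr)
  also have "A *v p = \<tau>\<^sup>2 *\<^sub>R (A *v (transpose A *v (Si *v r)))"
    by (simp add: p_def post_mean_def r_def Si_def matrix_vector_mult_scaleR)
  also have "A *v (transpose A *v (Si *v r)) = (1/\<tau>\<^sup>2) *\<^sub>R (r - \<sigma>\<^sup>2 *\<^sub>R (Si *v r))"
    unfolding Si_def by (rule A_transpose_A_marginal_cov_inv)
  finally have pHp: "p \<bullet> (post_prec *v p) = (1/\<sigma>\<^sup>2) * (r \<bullet> r) - (Si *v r) \<bullet> r"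
    using sigma_pos tau_pos by (simp add: inner_diff_left algebra_simps)
  have "(x - post_mean mu y) \<bullet> (post_prec *v (x - post_mean mu y))
      = u \<bullet> (post_prec *v u) - 2 * (u \<bullet> (post_prec *v p)) + p \<bullet> (post_prec *v p)"
    using inner_matrix_vector_symmetric[OF sym, of p u]
    by (simp add: u_def p_def matrix_vector_mult_diff_distrib inner_diff_left inner_diff_right)
  moreover have "(norm (x - mu))\<^sup>2 / \<tau>\<^sup>2 + (norm (y - A *v x))\<^sup>2 / \<sigma>\<^sup>2
      = (1/\<tau>\<^sup>2) * (u \<bullet> u) + (1/\<sigma>\<^sup>2) * (r \<bullet> r - 2 * ((A *v u) \<bullet> r) + (A *v u) \<bullet> (A *v u))"
  proof -
    have "y - A *v x = r - A *v u" by (simp add: r_def u_def matrix_vector_mult_diff_distrib)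
    then show ?thesis
      by (simp add: u_def[symmetric] power2_norm_eq_inner inner_diff_left inner_diff_right inner_commute)
  qed
  ultimately show ?thesis by (simp add: uHu uHp pHp Si_def r_def[symmetric] inner_commute algebra_simps)
qed

text \<open>The constant \<open>\<kappa>\<close> is in fact 1; only its independence of \<open>mu\<close>, \<open>x\<close> and \<open>y\<close> is used.\<close>
lemma prior_mult_likelihood:
  obtains \<kappa> where "\<kappa> > 0"
    "\<And>mu x y. gauss_density mu (\<tau>\<^sup>2 *\<^sub>R mat 1) x * gauss_density (A *v x) (\<sigma>\<^sup>2 *\<^sub>R mat 1) y
      = \<kappa> * gauss_density (A *v mu) marginal_cov y * gauss_density (post_mean mu y) post_cov x"
proof -
  define K1 where "K1 = sqrt ((2 * pi) ^ CARD('m) * det marginal_cov)"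
  define K2 where "K2 = sqrt ((2 * pi) ^ CARD('n) * det post_cov)"
  define K where "K = 1 / (sqrt ((2 * pi) ^ CARD('n) * (\<tau>\<^sup>2) ^ CARD('n)) * sqrt ((2 * pi) ^ CARD('m) * (\<sigma>\<^sup>2) ^ CARD('m)))"
  have dets: "det marginal_cov > 0" "det post_cov > 0"
    using det_pos_def_pos pos_def_marginal_cov pos_def_post_cov by blast+
  then have K1: "K1 > 0" and K2: "K2 > 0" by (simp_all add: K1_def K2_def)
  have K: "K > 0" using sigma_pos tau_pos by (simp add: K_def)
  have "gauss_density mu (\<tau>\<^sup>2 *\<^sub>R mat 1) x * gauss_density (A *v x) (\<sigma>\<^sup>2 *\<^sub>R mat 1) y
      = (K * K1 * K2) * gauss_density (A *v mu) marginal_cov y * gauss_density (post_mean mu y) post_cov x"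
    for mu x y
  proof -
    define r where "r = y - A *v mu"
    define m where "m = post_mean mu y"
    have "gauss_density mu (\<tau>\<^sup>2 *\<^sub>R mat 1) x * gauss_density (A *v x) (\<sigma>\<^sup>2 *\<^sub>R mat 1) y
        = K * exp (- ((norm (x - mu))\<^sup>2 / \<tau>\<^sup>2 + (norm (y - A *v x))\<^sup>2 / \<sigma>\<^sup>2) / 2)"
      using sigma_pos tau_pos
      by (simp add: gauss_density_isotropic K_def norm_minus_commute[of "A *v x"] exp_add[symmetric] field_simps)
    also have "\<dots> = K * exp (- (r \<bullet> (matrix_inv marginal_cov *v r)) / 2) * exp (- ((x - m) \<bullet> (post_prec *v (x - m))) / 2)"
      by (simp add: completing_the_square r_def m_def exp_add[symmetric] field_simps)
    also have "\<dots> = (K * K1 * K2) * gauss_density (A *v mu) marginal_cov y * gauss_density m post_cov x"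
      using dets by (simp add: gauss_density_def matrix_inv_post_cov r_def K1_def K2_def)
    finally show ?thesis by (simp add: m_def)
  qed
  moreover have "K * K1 * K2 > 0" using K K1 K2 by simp
  ultimately show ?thesis using that by blast
qed

lemma gm_evidence_pos:
  fixes w :: "nat \<Rightarrow> real" and mu :: "nat \<Rightarrow> real^'n"
  assumes w_nonneg: "\<And>j. j < M \<Longrightarrow> w j \<ge> 0" and w_pos: "\<exists>j<M. w j > 0"
  shows "(\<Sum>i<M. w i * gauss_density (A *v mu i) marginal_cov y) > 0"
proof -
  obtain j where "j < M" "w j > 0" using w_pos by blast
  then show ?thesis
    using w_nonneg gauss_density_pos[OF pos_def_marginal_cov]
    by (intro sum_pos2[where i = j]) (auto simp: less_imp_le intro!: mult_nonneg_nonneg)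
qed

lemma posterior_gm_prior:
  fixes w :: "nat \<Rightarrow> real" and mu :: "nat \<Rightarrow> real^'n" and y :: "real^'m"
  assumes w_nonneg: "\<And>j. j < M \<Longrightarrow> w j \<ge> 0" and w_pos: "\<exists>j<M. w j > 0"
  defines "wt \<equiv> \<lambda>j. w j * gauss_density (A *v mu j) marginal_cov y"
  shows "posterior (gm_prior M w mu \<tau>) A \<sigma> y = density lborel
    (\<lambda>x. ennreal (\<Sum>j<M. wt j / (\<Sum>i<M. wt i) * gauss_density (post_mean (mu j) y) post_cov x))"
proof -
  obtain \<kappa> where \<kappa>: "\<kappa> > 0" and factor:
    "\<And>m x v. gauss_density m (\<tau>\<^sup>2 *\<^sub>R mat 1) x * gauss_density (A *v x) (\<sigma>\<^sup>2 *\<^sub>R mat 1) v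
      = \<kappa> * gauss_density (A *v m) marginal_cov v * gauss_density (post_mean m v) post_cov x"
    using prior_mult_likelihood by blast
  define Z where "Z = (\<Sum>i<M. wt i)"
  have Z: "Z > 0" unfolding Z_def wt_def by (rule gm_evidence_pos[OF w_nonneg w_pos])
  have wt_nonneg: "\<kappa> * wt j \<ge> 0" if "j < M" for j
    using \<kappa> w_nonneg[OF that] gauss_density_pos[OF pos_def_marginal_cov] unfolding wt_def
    by (intro mult_nonneg_nonneg) (auto simp: less_imp_le)
  define L where "L x = (\<Sum>j<M. (\<kappa> * wt j) * gauss_density (post_mean (mu j) y) post_cov x)" for x
  have L_eq: "gm_prior M w mu \<tau> x * gauss_density (A *v x) (\<sigma>\<^sup>2 *\<^sub>R mat 1) y = L x" for x
    by (simp add: L_def gm_prior_def sum_distrib_left sum_distrib_right factor wt_def mult_ac)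
  have "L x \<ge> 0" for x
  proof -
    have "0 \<le> (\<kappa> * wt j) * gauss_density (post_mean (mu j) y) post_cov x" if "j < M" for j
      using wt_nonneg[OF that] less_imp_le[OF gauss_density_pos[OF pos_def_post_cov]]
      by (rule mult_nonneg_nonneg)
    then show ?thesis unfolding L_def by (intro sum_nonneg) auto
  qed
  moreover have "(\<integral>\<^sup>+x. ennreal (L x) \<partial>lborel) = ennreal (\<kappa> * Z)"
    unfolding L_def Z_def sum_distrib_left
    using nn_integral_gauss_mixture[OF pos_def_post_cov, of "{..<M}"] wt_nonneg by simp
  moreover have "L \<in> borel_measurable borel" unfolding L_def by measurable
  ultimately have "(\<integral>x. L x \<partial>lborel) = \<kappa> * Z"
    using nn_integral_eq_integrable[of L lborel "\<kappa> * Z"] \<kappa> Z by simp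
  moreover have "L x / (\<kappa> * Z) = (\<Sum>j<M. wt j / Z * gauss_density (post_mean (mu j) y) post_cov x)" for x
    using \<kappa> by (simp add: L_def sum_divide_distrib)
  ultimately show ?thesis by (simp add: posterior_def L_eq Z_def)
qed

lemma tv_dist_posterior_gm_prior_component_le:
  fixes w :: "nat \<Rightarrow> real" and mu :: "nat \<Rightarrow> real^'n" and y :: "real^'m"
  assumes w_nonneg: "\<And>j. j < M \<Longrightarrow> w j \<ge> 0" and w_pos: "\<exists>j<M. w j > 0" and j0: "j0 < M"
  defines "wt \<equiv> \<lambda>j. w j * gauss_density (A *v mu j) marginal_cov y"
  shows "tv_dist (posterior (gm_prior M w mu \<tau>) A \<sigma> y) (gauss_measure (post_mean (mu j0) y) post_cov)
    \<le> (\<Sum>j\<in>{..<M} - {j0}. wt j / (\<Sum>i<M. wt i))"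
proof -
  have Z: "(\<Sum>i<M. wt i) > 0" unfolding wt_def by (rule gm_evidence_pos[OF w_nonneg w_pos])
  have "wt j \<ge> 0" if "j < M" for j
    using w_nonneg[OF that] gauss_density_pos[OF pos_def_marginal_cov] by (simp add: wt_def less_imp_le)
  then have "tv_dist (density lborel (\<lambda>x. ennreal (\<Sum>j<M. wt j / (\<Sum>i<M. wt i) * gauss_density (post_mean (mu j) y) post_cov x)))
      (density lborel (\<lambda>x. ennreal (gauss_density (post_mean (mu j0) y) post_cov x)))
    \<le> (\<Sum>j\<in>{..<M} - {j0}. wt j / (\<Sum>i<M. wt i))"
    using Z j0 gauss_density_pos[OF pos_def_post_cov] prob_space_gauss_measure[OF pos_def_post_cov]
    by (intro tv_dist_mixture_component_le)
      (auto simp: gauss_measure_def less_imp_le simp flip: sum_divide_distrib)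
  then show ?thesis
    by (simp add: posterior_gm_prior[OF w_nonneg w_pos] wt_def gauss_measure_def)
qed

definition score :: "real^'n \<Rightarrow> real^'m \<Rightarrow> real" where
  "score mu y = (1/2) * (norm (psd_sqrt (matrix_inv marginal_cov) *v (y - A *v mu)))\<^sup>2"

lemma gm_weight_eq_softmax:
  "w j * gauss_density (A *v mu j) marginal_cov y / (\<Sum>i<M. w i * gauss_density (A *v mu i) marginal_cov y)
    = w j * exp (- score (mu j) y) / (\<Sum>i<M. w i * exp (- score (mu i) y))"
proof -
  define K where "K = sqrt ((2 * pi) ^ CARD('m) * det marginal_cov)"
  have "K > 0" using det_pos_def_pos[OF pos_def_marginal_cov] by (simp add: K_def)
  moreover have "gauss_density (A *v m) marginal_cov y = exp (- score m y) / K" for m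
    by (simp add: score_def K_def gauss_density_psd_sqrt[OF pos_def_marginal_cov])
  ultimately show ?thesis by (simp add: flip: sum_divide_distrib)
qed

end

theorem theorem2:
  fixes A :: "real^'n^'m"
    and M :: nat and w :: "nat \<Rightarrow> real" and mu :: "nat \<Rightarrow> real^'n"
    and \<sigma> \<tau> C \<delta>0 :: real and ystar :: "real^'m" and jstar :: nat
  defines "Sig \<equiv> \<sigma>\<^sup>2 *\<^sub>R (mat 1 :: real^'m^'m) + \<tau>\<^sup>2 *\<^sub>R (A ** transpose A)"
  defines "s \<equiv> (\<lambda>j. (1/2) * (norm (psd_sqrt (matrix_inv Sig) *v (ystar - A *v mu j)))\<^sup>2)"
  defines "wt \<equiv> (\<lambda>j. w j * gauss_density (A *v mu j) Sig ystar)"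
  defines "PJ \<equiv> (\<lambda>j. wt j / (\<Sum>i<M. wt i))"
  defines "mpost \<equiv> mu jstar + \<tau>\<^sup>2 *\<^sub>R (transpose A *v (matrix_inv Sig *v (ystar - A *v mu jstar)))"
  defines "Spost \<equiv> \<tau>\<^sup>2 *\<^sub>R (mat 1 :: real^'n^'n) - \<tau>^4 *\<^sub>R (transpose A ** matrix_inv Sig ** A)"
  assumes M_pos: "M \<ge> 1"
    and sigma_pos: "\<sigma> > 0" and tau_pos: "\<tau> > 0"
    and w_nonneg: "\<forall>j<M. w j \<ge> 0" and w_sum: "(\<Sum>j<M. w j) = 1"
    and C_gt1: "C > 1"
    and w_ratio: "\<forall>i<M. \<forall>j<M. 1 / C \<le> w i / w j \<and> w i / w j \<le> C"
    and jstar_lt: "jstar < M"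
    and jstar_unique: "\<forall>j<M. j \<noteq> jstar \<longrightarrow> s jstar < s j"
    and delta0_pos: "\<delta>0 > 0"
    and gap: "\<forall>j<M. j \<noteq> jstar \<longrightarrow> (s j - s jstar) / real CARD('m) \<ge> \<delta>0"
  shows "(\<Sum>j\<in>{j. j < M \<and> j \<noteq> jstar}. PJ j) \<le> C * real M * exp (- \<delta>0 * real CARD('m))
     \<and> tv_dist (posterior (gm_prior M w mu \<tau>) A \<sigma> ystar) (gauss_measure mpost Spost)
         \<le> C * real M * exp (- \<delta>0 * real CARD('m))"
proof -
  interpret linear_gaussian_model A \<sigma> \<tau> using sigma_pos tau_pos by unfold_locales
  have Sig_eq: "Sig = marginal_cov" by (simp add: Sig_def marginal_cov_def)
  have w_pos: "w j > 0" if "j < M" for j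
  proof -
    have "1 / C \<le> w j / w j" using w_ratio that by blast
    then have "w j \<noteq> 0" using C_gt1 by auto
    then show ?thesis using w_nonneg that by force
  qed
  have PJ_eq: "PJ j = w j * exp (- s j) / (\<Sum>i<M. w i * exp (- s i))" for j
    using gm_weight_eq_softmax by (simp add: PJ_def wt_def s_def score_def Sig_eq)
  have "(\<Sum>j\<in>{..<M} - {jstar}. PJ j) \<le> C * real (card {..<M}) * exp (- (\<delta>0 * real CARD('m)))"
    unfolding PJ_eq
  proof (rule mixture_weight_tail_le)
    show "s j - s jstar \<ge> \<delta>0 * real CARD('m)" if "j \<in> {..<M}" "j \<noteq> jstar" for j
      using gap that by (simp add: le_divide_eq)
  qed (use jstar_lt w_pos w_ratio in auto)
  moreover have "tv_dist (posterior (gm_prior M w mu \<tau>) A \<sigma> ystar) (gauss_measure mpost Spost)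
      \<le> (\<Sum>j\<in>{..<M} - {jstar}. PJ j)"
    using tv_dist_posterior_gm_prior_component_le[of M w, OF _ exI[of _ jstar] jstar_lt] w_nonneg w_pos jstar_lt
    by (simp add: PJ_def wt_def Sig_eq mpost_def Spost_def post_mean_def post_cov_def)
  moreover have "{j. j < M \<and> j \<noteq> jstar} = {..<M} - {jstar}" by auto
  ultimately show ?thesis by simp
qed

end
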